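(* Let $X\in L^\infty$, let $\mathcal{G}\subseteq\mathcal{H}$ be sub-$\sigma$-fields of $\mathcal{F}$, and let $Y\in\mathbb{E}[X\mid\mathcal{H}]$. Then $\varepsilon(Y,\mathcal{G})\le\varepsilon(X,\mathcal{G})$ a.s.
   Context: $\mathbb{K}$ is a local field with non-archimedean absolute value $|\cdot|$. $(\Omega,\mathcal{F},\mathbb{P})$ is a probability space; $L^\infty$ is the space of $\mathbb{K}$-valued random variables $X$ with $\operatorname{ess\,sup}|X|<\infty$; $L^\infty(\mathcal{G})$ its $\mathcal{G}$-measurable subspace. For a non-negative real random variable $S$, $\operatorname{ess\,sup}\{S\mid\mathcal{G}\}:=\sup_{p\ge1}\mathbb{E}[S^p\mid\mathcal{G}]^{1/p}$ (usual real conditional expectation), $\|X\|_\mathcal{G}:=\operatorname{ess\,sup}\{|X|\mid\mathcal{G}\}$, and $\mathbb{E}[X\mid\mathcal{G}]:=\{Y\in L^\infty(\mathcal{G}): \|X-Y\|_\mathcal{G}\le\|X-Z\|_\mathcal{G}\text{ a.s. for all }Z\in L^\infty(\mathcal{G})\}$. This set is non-empty, and $\|X-Y\|_\mathcal{G}$ is a.s. the same for all $Y\in\mathbb{E}[X\mid\mathcal{G}]$; this common random variable is denoted $\varepsilon(X,\mathcal{G})$. *)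

theory Defs
  imports "HOL-Probability.Probability"
begin

definition nonarch_abs :: "('k::field \<Rightarrow> real) \<Rightarrow> bool" where
  "nonarch_abs v \<longleftrightarrow>
     (\<forall>x. 0 \<le> v x) \<and> (\<forall>x. v x = 0 \<longleftrightarrow> x = 0) \<and>
     (\<forall>x y. v (x * y) = v x * v y) \<and>
     (\<forall>x y. v (x + y) \<le> max (v x) (v y))"

text \<open>Local field: non-archimedean, non-trivial (non-discrete topology) and locally
  compact, i.e. the closed unit ball is (sequentially) compact for the metric
  d(x,y) = v(x - y).\<close>
definition local_field_abs :: "('k::field \<Rightarrow> real) \<Rightarrow> bool" where
  "local_field_abs v \<longleftrightarrow> nonarch_abs v \<and>
     (\<exists>x. v x \<noteq> 0 \<and> v x \<noteq> 1) \<and>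
     (\<forall>s::nat \<Rightarrow> 'k. (\<forall>n. v (s n) \<le> 1) \<longrightarrow>
        (\<exists>l r. strict_mono r \<and> v l \<le> 1 \<and> (\<lambda>n. v (s (r n) - l)) \<longlonglongrightarrow> 0))"

definition Kborel :: "('k::field \<Rightarrow> real) \<Rightarrow> 'k measure" where
  "Kborel v = sigma UNIV {{y. v (y - x) < r} | x r. True}"

definition cond_esssup :: "'a measure \<Rightarrow> 'a measure \<Rightarrow> ('a \<Rightarrow> real) \<Rightarrow> 'a \<Rightarrow> ereal" where
  "cond_esssup M G S \<omega> =
     (SUP p\<in>{1::nat..}. ereal (root p (real_cond_exp M G (\<lambda>w. S w ^ p) \<omega>)))"

definition cnorm :: "'a measure \<Rightarrow> 'a measure \<Rightarrow> ('k::field \<Rightarrow> real) \<Rightarrow> ('a \<Rightarrow> 'k) \<Rightarrow> 'a \<Rightarrow> ereal" where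
  "cnorm M G v X = cond_esssup M G (\<lambda>\<omega>. v (X \<omega>))"

definition Linf :: "'a measure \<Rightarrow> 'a measure \<Rightarrow> ('k::field \<Rightarrow> real) \<Rightarrow> ('a \<Rightarrow> 'k) set" where
  "Linf M G v = {X. X \<in> measurable G (Kborel v) \<and> (\<exists>C. AE \<omega> in M. v (X \<omega>) \<le> C)}"

definition condE :: "'a measure \<Rightarrow> 'a measure \<Rightarrow> ('k::field \<Rightarrow> real) \<Rightarrow> ('a \<Rightarrow> 'k) \<Rightarrow> ('a \<Rightarrow> 'k) set" where
  "condE M G v X = {Y \<in> Linf M G v. \<forall>Z \<in> Linf M G v.
      AE \<omega> in M. cnorm M G v (\<lambda>w. X w - Y w) \<omega> \<le> cnorm M G v (\<lambda>w. X w - Z w) \<omega>}"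

text \<open>\<epsilon>(X, G) = ||X - Y||_G for any Y \<in> E[X | G].\<close>
definition eps :: "'a measure \<Rightarrow> 'a measure \<Rightarrow> ('k::field \<Rightarrow> real) \<Rightarrow> ('a \<Rightarrow> 'k) \<Rightarrow> 'a \<Rightarrow> ereal" where
  "eps M G v X = cnorm M G v (\<lambda>w. X w - (SOME Y. Y \<in> condE M G v X) w)"

end

(* Write \<parallel>U\<parallel>_G for the conditional norm ess sup{|U| | G}. Let Z be a best G-approximation
   of X. Since |.| is ultrametric, |Y - Z| \<le> max |X - Y| |X - Z|, and
   |X - Y| \<le> \<parallel>X - Y\<parallel>_H \<le> \<parallel>X - Z\<parallel>_H \<le> \<parallel>X - Z\<parallel>_G because Y is a best H-approximation and Z is
   H-measurable; hence \<epsilon>(Y, G) \<le> \<parallel>Y - Z\<parallel>_G \<le> \<parallel>X - Z\<parallel>_G = \<epsilon>(X, G).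

   Most of the work is the existence of best approximations, which the definition of \<epsilon> by
   choice needs. Minimise the mean error E \<parallel>X - Z\<parallel>_G; pasting approximations along
   G-measurable sets turns a minimising sequence into one with decreasing conditional errors,
   and a pointwise limit is taken: where the limiting error is positive, discreteness of the
   value group of the local field makes the sequence eventually stationary up to that error;
   where it is zero, completeness provides a limit. *)

theory Submission
  imports Defs
begin

section \<open>Ultrametric absolute values\<close>

locale nonarch_abs_field =
  fixes v :: "'k::field \<Rightarrow> real"
  assumes nonarch_abs: "nonarch_abs v"
begin

lemma v_nonneg [simp]: "0 \<le> v x"
  and v_eq_0_iff [simp]: "v x = 0 \<longleftrightarrow> x = 0"
  and v_mult: "v (x * y) = v x * v y"
  and v_add_le_max: "v (x + y) \<le> max (v x) (v y)"
  using nonarch_abs unfolding nonarch_abs_def by auto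

lemma v_zero [simp]: "v 0 = 0"
  by simp

lemma v_one [simp]: "v 1 = 1"
  using v_mult[of 1 1] by simp

lemma v_minus [simp]: "v (- x) = v x"
proof -
  have "v (- 1) * v (- 1) = 1"
    using v_mult[of "- 1" "- 1"] by simp
  then have "v (- 1) = 1"
    by (metis abs_of_nonneg abs_square_eq_1 power2_eq_square v_nonneg)
  then show ?thesis
    using v_mult[of "- 1" x] by simp
qed

lemma v_minus_commute: "v (x - y) = v (y - x)"
  using v_minus[of "x - y"] by simp

lemma v_diff_le_max: "v (x - y) \<le> max (v x) (v y)"
  using v_add_le_max[of x "- y"] by simp

lemma v_ultrametric: "v (x - z) \<le> max (v (x - y)) (v (y - z))"
  using v_add_le_max[of "x - y" "y - z"] by simp

lemma v_add_eq_right: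
  assumes "v x < v y"
  shows "v (x + y) = v y"
  using v_add_le_max[of x y] v_diff_le_max[of "x + y" x] assms by auto

lemma v_diff_eq_max:
  assumes "v x \<noteq> v y"
  shows "v (x - y) = max (v x) (v y)"
proof (cases "v x < v y")
  case True
  then show ?thesis
    using v_add_eq_right[of x "- y"] by simp
next
  case False
  then show ?thesis
    using v_add_eq_right[of "- y" x] assms by (simp add: max_def)
qed

lemma v_inverse: "v (inverse x) = inverse (v x)"
proof (cases "x = 0")
  case False
  then have "v x * v (inverse x) = 1"
    using v_mult[of x "inverse x"] by (simp del: inverse_eq_divide)
  then show ?thesis
    by (simp add: inverse_unique)
qed simp

lemma v_divide: "v (x / y) = v x / v y"
  by (simp add: divide_inverse v_mult v_inverse)

lemma v_power: "v (x ^ n) = v x ^ n"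
  by (induction n) (simp_all add: v_mult)

end

section \<open>Local fields\<close>

locale local_field =
  fixes v :: "'k::field \<Rightarrow> real"
  assumes local_field: "local_field_abs v"

sublocale local_field \<subseteq> nonarch_abs_field
  using local_field unfolding local_field_abs_def by unfold_locales blast

context local_field
begin

lemma exists_v_gt_one: "\<exists>t. 1 < v t"
proof -
  obtain x where x: "v x \<noteq> 0" "v x \<noteq> 1"
    using local_field unfolding local_field_abs_def by blast
  show ?thesis
  proof (cases "1 < v x")
    case False
    with x have "0 < v x" "v x < 1"
      by (simp_all add: less_le)
    then have "1 < v (inverse x)"
      by (simp add: v_inverse one_less_inverse)
    then show ?thesis ..
  qed blast
qed

lemma exists_v_ge: "\<exists>y. y \<noteq> 0 \<and> B \<le> v y"
proof -
  obtain t where t: "1 < v t"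
    using exists_v_gt_one ..
  obtain n where "B < v t ^ n"
    using real_arch_pow[OF t] ..
  with t show ?thesis
    by (intro exI[of _ "t ^ n"]) (auto simp: v_power)
qed

lemma unit_ball_seq_compact:
  fixes s :: "nat \<Rightarrow> 'k"
  assumes "\<forall>n. v (s n) \<le> 1"
  shows "\<exists>l r. strict_mono r \<and> v l \<le> 1 \<and> (\<lambda>n. v (s (r n) - l)) \<longlonglongrightarrow> 0"
  using local_field assms unfolding local_field_abs_def by blast

lemma bounded_seq_convergent_subseq:
  fixes s :: "nat \<Rightarrow> 'k"
  assumes "\<And>n. v (s n) \<le> B"
  shows "\<exists>l r. strict_mono r \<and> (\<lambda>n. v (s (r n) - l)) \<longlonglongrightarrow> 0"
proof -
  obtain y where y: "y \<noteq> 0" "B \<le> v y"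
    using exists_v_ge[of B] by blast
  have "0 < v y"
    using y(1) v_nonneg[of y] by (simp add: less_le)
  then have "v (s n / y) \<le> 1" for n
    using assms[of n] y(2) by (simp add: v_divide)
  then obtain l r where "strict_mono r" and lim: "(\<lambda>n. v (s (r n) / y - l)) \<longlonglongrightarrow> 0"
    using unit_ball_seq_compact[of "\<lambda>n. s n / y"] by blast
  moreover have "v (s (r n) - l * y) = v (s (r n) / y - l) * v y" for n
  proof -
    have "s (r n) - l * y = (s (r n) / y - l) * y"
      using y(1) by (simp add: field_simps)
    then show ?thesis
      by (simp add: v_mult)
  qed
  moreover have "(\<lambda>n. v (s (r n) / y - l) * v y) \<longlonglongrightarrow> 0"
    using tendsto_mult_left_zero[OF lim] .
  ultimately show ?thesis
    by (intro exI[of _ "l * y"] exI[of _ r]) simp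
qed

lemma bounded_seq_close_pair:
  fixes s :: "nat \<Rightarrow> 'k"
  assumes "\<And>n. v (s n) \<le> B" and "0 < e"
  shows "\<exists>m n. m < n \<and> v (s m - s n) < e"
proof -
  obtain l r where r: "strict_mono r" and lim: "(\<lambda>n. v (s (r n) - l)) \<longlonglongrightarrow> 0"
    using bounded_seq_convergent_subseq assms(1) by blast
  then obtain N where N: "\<And>n. n \<ge> N \<Longrightarrow> v (s (r n) - l) < e"
    using assms(2) unfolding LIMSEQ_def dist_real_def by fastforce
  have "v (s (r N) - s (r (Suc N))) \<le> max (v (s (r N) - l)) (v (l - s (r (Suc N))))"
    by (rule v_ultrametric)
  also have "\<dots> < e"
    using N[of N] N[of "Suc N"] by (simp add: v_minus_commute)
  finally show ?thesis
    using r by (auto simp: strict_mono_def)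
qed

lemma finite_values_between:
  assumes "0 < a"
  shows "finite {x \<in> range v. a \<le> x \<and> x \<le> b}"
proof (rule ccontr)
  assume "infinite {x \<in> range v. a \<le> x \<and> x \<le> b}"
  then obtain f :: "nat \<Rightarrow> real" where f: "inj f" "range f \<subseteq> {x \<in> range v. a \<le> x \<and> x \<le> b}"
    using infinite_countable_subset by blast
  then have "\<forall>n. \<exists>y. v y = f n"
    by (metis (no_types, lifting) mem_Collect_eq rangeE range_subsetD)
  then obtain s where s: "\<And>n. v (s n) = f n"
    by metis
  have bounds: "a \<le> v (s n)" "v (s n) \<le> b" for n
    using f(2) s by auto
  obtain m n where "m < n" "v (s m - s n) < a"
    using bounded_seq_close_pair[OF bounds(2) assms] by blast
  moreover have "v (s m) \<noteq> v (s n)"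
    using \<open>m < n\<close> f(1) s by (metis inj_eq less_irrefl)
  ultimately show False
    using v_diff_eq_max[of "s m" "s n"] bounds(1)[of m] by simp
qed

lemma totally_bounded:
  assumes "0 < e"
  shows "\<exists>F. finite F \<and> (\<forall>y. v y \<le> B \<longrightarrow> (\<exists>f\<in>F. v (y - f) < e))"
proof (rule ccontr)
  assume "\<not> ?thesis"
  then have far: "\<exists>y. v y \<le> B \<and> (\<forall>f\<in>F. e \<le> v (y - f))" if "finite F" for F
    using that by (meson not_less)
  define next_point where
    "next_point l = (SOME y. v y \<le> B \<and> (\<forall>f\<in>set l. e \<le> v (y - f)))" for l
  have next_point: "v (next_point l) \<le> B \<and> (\<forall>f\<in>set l. e \<le> v (next_point l - f))" for l
    unfolding next_point_def by (rule someI_ex) (simp add: far)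
  define prefix where "prefix = rec_nat [] (\<lambda>n l. next_point l # l)"
  define s where "s n = next_point (prefix n)" for n
  have set_prefix: "set (prefix n) = s ` {..<n}" for n
    by (induction n) (auto simp: prefix_def s_def lessThan_Suc)
  have "v (s n) \<le> B" for n
    using next_point unfolding s_def by blast
  then obtain m n where "m < n" "v (s m - s n) < e"
    using bounded_seq_close_pair assms by blast
  moreover have "e \<le> v (s n - s m)"
    using next_point[of "prefix n"] set_prefix[of n] \<open>m < n\<close> unfolding s_def by auto
  ultimately show False
    by (simp add: v_minus_commute)
qed

lemma countable_dense: "\<exists>D. countable D \<and> (\<forall>y e. 0 < e \<longrightarrow> (\<exists>d\<in>D. v (y - d) < e))"
proof -
  define F where "F k j = (SOME F. finite F \<and>
      (\<forall>y. v y \<le> real k \<longrightarrow> (\<exists>f\<in>F. v (y - f) < 1 / real (Suc j))))" for k j :: nat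
  have F: "finite (F k j) \<and> (\<forall>y. v y \<le> real k \<longrightarrow> (\<exists>f\<in>F k j. v (y - f) < 1 / real (Suc j)))" for k j
    unfolding F_def by (rule someI_ex, rule totally_bounded) simp
  define D where "D = (\<Union>k j. F k j)"
  have "countable (F k j)" for k j
    using F countable_finite by blast
  then have "countable D"
    unfolding D_def by (intro countable_UN) auto
  moreover have "\<exists>d\<in>D. v (y - d) < e" if "0 < e" for y e
  proof -
    obtain j where j: "inverse (real (Suc j)) < e"
      using reals_Archimedean[OF \<open>0 < e\<close>] ..
    obtain f where "f \<in> F (nat \<lceil>v y\<rceil>) j" "v (y - f) < 1 / real (Suc j)"
      using F real_nat_ceiling_ge by blast
    with j show ?thesis
      unfolding D_def by (intro bexI[of _ f]) (auto simp: inverse_eq_divide)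
  qed
  ultimately show ?thesis
    by blast
qed

definition v_Cauchy :: "(nat \<Rightarrow> 'k) \<Rightarrow> bool" where
  "v_Cauchy s \<longleftrightarrow> (\<forall>e>0. \<exists>N. \<forall>n\<ge>N. \<forall>m\<ge>N. v (s n - s m) < e)"

lemma v_Cauchy_bounded:
  assumes "v_Cauchy s"
  shows "\<exists>B. \<forall>n. v (s n) \<le> B"
proof -
  obtain N where N: "\<And>n. n \<ge> N \<Longrightarrow> v (s n - s N) < 1"
    using assms unfolding v_Cauchy_def by (meson order_refl zero_less_one)
  have bound_N: "v (s k) \<le> Max ((\<lambda>k. v (s k)) ` {..N})" if "k \<le> N" for k
    using that by (intro Max_ge) auto
  have "v (s n) \<le> max 1 (Max ((\<lambda>k. v (s k)) ` {..N}))" for n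
  proof (cases "n \<le> N")
    case True
    then show ?thesis
      using bound_N by (simp add: le_max_iff_disj)
  next
    case False
    have "v (s n) \<le> max (v (s n - s N)) (v (s N))"
      using v_add_le_max[of "s n - s N" "s N"] by simp
    with N[of n] False bound_N[of N] show ?thesis
      by linarith
  qed
  then show ?thesis
    by blast
qed

lemma v_Cauchy_convergent:
  assumes "v_Cauchy s"
  shows "\<exists>l. (\<lambda>n. v (s n - l)) \<longlonglongrightarrow> 0"
proof -
  obtain B where "\<And>n. v (s n) \<le> B"
    using v_Cauchy_bounded[OF assms] by blast
  then obtain l r where r: "strict_mono r" and lim: "(\<lambda>n. v (s (r n) - l)) \<longlonglongrightarrow> 0"
    using bounded_seq_convergent_subseq[of s B] by blast
  have "\<exists>N. \<forall>n\<ge>N. dist (v (s n - l)) 0 < e" if "0 < e" for e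
  proof -
    obtain N1 where N1: "\<And>n m. N1 \<le> n \<Longrightarrow> N1 \<le> m \<Longrightarrow> v (s n - s m) < e"
      using assms \<open>0 < e\<close> unfolding v_Cauchy_def by blast
    obtain N2 where N2: "\<And>n. N2 \<le> n \<Longrightarrow> dist (v (s (r n) - l)) 0 < e"
      using metric_LIMSEQ_D[OF lim \<open>0 < e\<close>] by blast
    define k where "k = r (max N1 N2)"
    have "N1 \<le> k"
      using seq_suble[OF r, of "max N1 N2"] unfolding k_def by linarith
    have "v (s k - l) < e"
      using N2[of "max N1 N2"] unfolding k_def by simp
    have "v (s n - l) < e" if "N1 \<le> n" for n
    proof -
      have "v (s n - l) \<le> max (v (s n - s k)) (v (s k - l))"
        by (rule v_ultrametric)
      moreover have "v (s n - s k) < e"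
        using N1[OF that \<open>N1 \<le> k\<close>] .
      ultimately show ?thesis
        using \<open>v (s k - l) < e\<close> by linarith
    qed
    then show ?thesis
      by auto
  qed
  then have "(\<lambda>n. v (s n - l)) \<longlonglongrightarrow> 0"
    by (rule metric_LIMSEQ_I)
  then show ?thesis ..
qed

text \<open>\<open>v_lim\<close> returns the junk value \<open>0\<close> on sequences that are not Cauchy.\<close>

definition v_lim :: "(nat \<Rightarrow> 'k) \<Rightarrow> 'k" where
  "v_lim s = (if v_Cauchy s then SOME l. (\<lambda>n. v (s n - l)) \<longlonglongrightarrow> 0 else 0)"

lemma tendsto_v_lim: "v_Cauchy s \<Longrightarrow> (\<lambda>n. v (s n - v_lim s)) \<longlonglongrightarrow> 0"
  unfolding v_lim_def using v_Cauchy_convergent by (auto intro: someI_ex)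

lemma v_lim_eqI:
  assumes lim: "(\<lambda>n. v (s n - l)) \<longlonglongrightarrow> 0"
  shows "v_Cauchy s" and "v_lim s = l"
proof -
  show "v_Cauchy s"
    unfolding v_Cauchy_def
  proof (intro allI impI)
    fix e :: real assume "0 < e"
    then obtain N where N: "\<And>n. N \<le> n \<Longrightarrow> dist (v (s n - l)) 0 < e"
      using metric_LIMSEQ_D[OF lim] by blast
    have "v (s n - s m) < e" if "N \<le> n" "N \<le> m" for n m
      using v_ultrametric[of "s n" "s m" l] N[OF that(1)] N[OF that(2)]
      by (simp add: v_minus_commute[of l])
    then show "\<exists>N. \<forall>n\<ge>N. \<forall>m\<ge>N. v (s n - s m) < e"
      by blast
  qed
  then have "(\<lambda>n. max (v (s n - l)) (v (s n - v_lim s))) \<longlonglongrightarrow> max 0 0"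
    by (intro tendsto_max lim tendsto_v_lim)
  moreover have "v (v_lim s - l) \<le> max (v (s n - l)) (v (s n - v_lim s))" for n
    using v_ultrametric[of "v_lim s" l "s n"] by (simp add: v_minus_commute max.commute)
  ultimately have "v (v_lim s - l) \<le> 0"
    using LIMSEQ_le_const by fastforce
  then show "v_lim s = l"
    using v_nonneg[of "v_lim s - l"] by simp
qed

lemma v_lim_less_iff:
  assumes "v_Cauchy s"
  shows "v (v_lim s - x) < r \<longleftrightarrow>
    (\<exists>q::rat. real_of_rat q < r \<and> (\<exists>N. \<forall>n\<ge>N. v (s n - x) \<le> real_of_rat q))"
proof -
  let ?l = "v_lim s"
  have eventually_close: "\<exists>N. \<forall>n\<ge>N. v (s n - ?l) < d" if "0 < d" for d
    using metric_LIMSEQ_D[OF tendsto_v_lim[OF assms] that] by simp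
  show ?thesis
  proof
    assume "v (?l - x) < r"
    then obtain q where q: "q \<in> \<rat>" "v (?l - x) < q" "q < r"
      using Rats_dense_in_real by blast
    then have "0 < q"
      using v_nonneg[of "?l - x"] by linarith
    then obtain N where N: "\<forall>n\<ge>N. v (s n - ?l) < q"
      using eventually_close by blast
    have "v (s n - x) \<le> q" if "N \<le> n" for n
      using v_ultrametric[of "s n" x ?l] N that q(2) by fastforce
    with q show "\<exists>q::rat. real_of_rat q < r \<and> (\<exists>N. \<forall>n\<ge>N. v (s n - x) \<le> real_of_rat q)"
      by (auto elim!: Rats_cases)
  next
    assume "\<exists>q::rat. real_of_rat q < r \<and> (\<exists>N. \<forall>n\<ge>N. v (s n - x) \<le> real_of_rat q)"
    then obtain q N where q: "real_of_rat q < r" and N: "\<And>n. N \<le> n \<Longrightarrow> v (s n - x) \<le> real_of_rat q"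
      by blast
    then have "0 < r"
      using N[of N] v_nonneg[of "s N - x"] by linarith
    then obtain N' where N': "\<forall>n\<ge>N'. v (s n - ?l) < r"
      using eventually_close by blast
    let ?n = "max N N'"
    have "v (?l - x) \<le> max (v (?l - s ?n)) (v (s ?n - x))"
      by (rule v_ultrametric)
    moreover have "v (?l - s ?n) < r"
      using N'[rule_format, of ?n] v_minus_commute[of ?l "s ?n"] by simp
    moreover have "v (s ?n - x) < r"
      using N[of ?n] q by simp
    ultimately show "v (?l - x) < r"
      by simp
  qed
qed

lemma eventually_values_le_limit:
  assumes "0 < e" "decseq q" "q \<longlonglongrightarrow> e"
  shows "\<exists>k. \<forall>y\<in>range v. y \<le> q k \<longrightarrow> y \<le> e"
proof -
  define F where "F = {y \<in> range v. e < y \<and> y \<le> q 0}"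
  have "finite F"
    using finite_values_between[OF \<open>0 < e\<close>, of "q 0"] by (rule finite_subset[rotated]) (auto simp: F_def)
  show ?thesis
  proof (cases "F = {}")
    case True
    then show ?thesis
      by (intro exI[of _ 0]) (auto simp: F_def not_less)
  next
    case False
    have "e < Min F"
      using Min_in[OF \<open>finite F\<close> False] by (simp add: F_def)
    then have "\<forall>\<^sub>F k in sequentially. q k < Min F"
      by (rule order_tendstoD(2)[OF assms(3)])
    then obtain k where k: "q k < Min F"
      unfolding eventually_sequentially by blast
    have "y \<le> e" if "y \<in> range v" "y \<le> q k" for y
    proof (rule ccontr)
      assume "\<not> y \<le> e"
      with that decseqD[OF assms(2), of 0 k] have "y \<in> F"
        by (auto simp: F_def)
      with \<open>finite F\<close> k that(2) show False
        using Min_le[of F y] by linarith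
    qed
    then show ?thesis
      by blast
  qed
qed

text \<open>Let the \<open>w n\<close> approximate \<open>x\<close> within radii \<open>q n\<close> decreasing to \<open>e\<close>. If \<open>e > 0\<close>,
  discreteness of the value group makes the sequence eventually stationary up to \<open>e\<close>; any
  such index already approximates \<open>x\<close> within \<open>e\<close>; and if \<open>e = 0\<close> the sequence converges to
  \<open>x\<close>.\<close>

lemma approx_seq_stabilizes:
  assumes approx: "\<And>n. v (x - w n) \<le> q n" and "decseq q" "q \<longlonglongrightarrow> e" "0 < e"
  shows "\<exists>k. \<forall>n\<ge>k. v (w n - w k) \<le> e"
proof -
  obtain k where k: "\<forall>y\<in>range v. y \<le> q k \<longrightarrow> y \<le> e"
    using eventually_values_le_limit assms(2-4) by blast
  have "v (w n - w k) \<le> e" if "k \<le> n" for n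
  proof -
    have "w n - w k = (x - w k) - (x - w n)"
      by simp
    then have "v (w n - w k) \<le> max (v (x - w k)) (v (x - w n))"
      by (metis v_diff_le_max)
    also have "\<dots> \<le> q k"
      using approx[of k] approx[of n] decseqD[OF \<open>decseq q\<close> that] by simp
    finally show ?thesis
      using k by blast
  qed
  then show ?thesis
    by blast
qed

lemma approx_seq_stable_index:
  assumes approx: "\<And>n. v (x - w n) \<le> q n" and "decseq q" "q \<longlonglongrightarrow> e"
    and stable: "\<forall>n\<ge>k. v (w n - w k) \<le> e"
  shows "v (x - w k) \<le> e"
proof (rule LIMSEQ_le_const[OF \<open>q \<longlonglongrightarrow> e\<close>], intro exI allI impI)
  fix n assume "k \<le> n"
  have "v (x - w k) \<le> max (v (x - w n)) (v (w n - w k))"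
    by (rule v_ultrametric)
  moreover have "v (w n - w k) \<le> q n"
    using stable \<open>k \<le> n\<close> decseq_ge[OF assms(2,3), of n] by (meson order_trans)
  ultimately show "v (x - w k) \<le> q n"
    using approx[of n] by simp
qed

lemma approx_seq_converges:
  assumes approx: "\<And>n. v (x - w n) \<le> q n" and "q \<longlonglongrightarrow> 0"
  shows "v_Cauchy w" and "v_lim w = x"
proof -
  have "(\<lambda>n. v (w n - x)) \<longlonglongrightarrow> 0"
  proof (rule tendsto_sandwich[of "\<lambda>_. 0" _ _ q])
    show "\<forall>\<^sub>F n in sequentially. v (w n - x) \<le> q n"
      using approx v_minus_commute[of x] by simp
  qed (use \<open>q \<longlonglongrightarrow> 0\<close> in simp_all)
  then show "v_Cauchy w" and "v_lim w = x"
    by (rule v_lim_eqI)+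
qed

end

lemma ereal_decseq_real:
  fixes q :: "nat \<Rightarrow> ereal"
  assumes "decseq q" "\<And>n. 0 \<le> q n" "q 0 \<noteq> \<infinity>"
  shows "\<And>n. q n = ereal (real_of_ereal (q n))"
    and "(INF n. q n) = ereal (real_of_ereal (INF n. q n))"
    and "decseq (\<lambda>n. real_of_ereal (q n))"
    and "(\<lambda>n. real_of_ereal (q n)) \<longlonglongrightarrow> real_of_ereal (INF n. q n)"
proof -
  have finite: "0 \<le> a \<Longrightarrow> a \<le> q 0 \<Longrightarrow> a = ereal (real_of_ereal a)" for a
    using assms(3) by (cases a; cases "q 0") auto
  show q: "q n = ereal (real_of_ereal (q n))" for n
    using assms(2) decseqD[OF assms(1), of 0 n] by (intro finite) auto
  show inf: "(INF n. q n) = ereal (real_of_ereal (INF n. q n))"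
    using assms(2) by (intro finite INF_greatest INF_lower) auto
  show "decseq (\<lambda>n. real_of_ereal (q n))"
    unfolding decseq_def
  proof (intro allI impI)
    fix m n :: nat assume "m \<le> n"
    have "ereal (real_of_ereal (q n)) \<le> ereal (real_of_ereal (q m))"
      unfolding q[symmetric] using decseqD[OF assms(1) \<open>m \<le> n\<close>] .
    then show "real_of_ereal (q n) \<le> real_of_ereal (q m)"
      by simp
  qed
  show "(\<lambda>n. real_of_ereal (q n)) \<longlonglongrightarrow> real_of_ereal (INF n. q n)"
    by (rule lim_real_of_ereal) (subst inf[symmetric], rule LIMSEQ_INF[OF assms(1)])
qed

lemma (in local_field) approx_point_le_INF:
  fixes q :: "nat \<Rightarrow> ereal"
  assumes approx: "\<And>n. ereal (v (x - w n)) \<le> q n"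
    and q: "decseq q" "\<And>n. 0 \<le> q n" "q 0 \<noteq> \<infinity>"
  defines "e \<equiv> INF n. q n"
  defines "P \<equiv> \<lambda>k. \<forall>n\<ge>k. ereal (v (w n - w k)) \<le> e"
  shows "ereal (v (x - (if 0 < e \<and> (\<exists>k. P k) then w (LEAST k. P k) else v_lim w))) \<le> e"
proof -
  define qr where "qr n = real_of_ereal (q n)" for n
  define er where "er = real_of_ereal e"
  have q_eq: "q n = ereal (qr n)" for n
    unfolding qr_def using ereal_decseq_real(1)[OF q] .
  have e_eq: "e = ereal er"
    unfolding er_def e_def using ereal_decseq_real(2)[OF q] .
  have "decseq qr" "qr \<longlonglongrightarrow> er"
    unfolding qr_def er_def e_def using ereal_decseq_real(3,4)[OF q] by simp_all
  have approx_r: "v (x - w n) \<le> qr n" for n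
    using approx[of n] q_eq[of n] by simp
  have P_iff: "P k \<longleftrightarrow> (\<forall>n\<ge>k. v (w n - w k) \<le> er)" for k
    unfolding P_def e_eq by simp
  show ?thesis
  proof (cases "0 < e \<and> (\<exists>k. P k)")
    case True
    then have "P (LEAST k. P k)"
      by (blast intro: LeastI_ex)
    with True show ?thesis
      using approx_seq_stable_index[OF approx_r \<open>decseq qr\<close> \<open>qr \<longlonglongrightarrow> er\<close>]
      unfolding P_iff e_eq by simp
  next
    case False
    have "\<not> 0 < er"
      using False approx_seq_stabilizes[OF approx_r \<open>decseq qr\<close> \<open>qr \<longlonglongrightarrow> er\<close>]
      unfolding P_iff e_eq by auto
    moreover have "0 \<le> er"
      using q(2) unfolding er_def e_def by (simp add: INF_greatest real_of_ereal_pos)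
    ultimately have "er = 0"
      by simp
    then have "v_lim w = x"
      using approx_seq_converges(2)[OF approx_r] \<open>qr \<longlonglongrightarrow> er\<close> by simp
    with False \<open>er = 0\<close> show ?thesis
      by (simp add: e_eq)
  qed
qed

section \<open>Measurability for the ball \<open>\<sigma>\<close>-algebra\<close>

lemma space_Kborel [simp]: "space (Kborel v) = UNIV"
  unfolding Kborel_def by (simp add: space_measure_of_conv)

lemma measurable_Kborel_iff:
  "f \<in> measurable N (Kborel v) \<longleftrightarrow> (\<forall>x r. {w \<in> space N. v (f w - x) < r} \<in> sets N)"
proof
  assume f: "f \<in> measurable N (Kborel v)"
  have "{y. v (y - x) < r} \<in> sets (Kborel v)" for x r
    unfolding Kborel_def by (subst sets_measure_of) auto
  from measurable_sets[OF f this] show "\<forall>x r. {w \<in> space N. v (f w - x) < r} \<in> sets N"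
    by (simp add: vimage_def Int_def conj_commute)
next
  assume balls: "\<forall>x r. {w \<in> space N. v (f w - x) < r} \<in> sets N"
  show "f \<in> measurable N (Kborel v)"
    unfolding Kborel_def
  proof (rule measurable_measure_of)
    fix B assume "B \<in> {{y. v (y - x) < r} | x r. True}"
    then obtain x r where "B = {y. v (y - x) < r}"
      by blast
    then have "f -` B \<inter> space N = {w \<in> space N. v (f w - x) < r}"
      by auto
    then show "f -` B \<inter> space N \<in> sets N"
      using balls by simp
  qed auto
qed

lemma borel_measurable_v_diff:
  assumes "f \<in> measurable N (Kborel v)"
  shows "(\<lambda>w. v (f w - c)) \<in> borel_measurable N"
  using assms unfolding borel_measurable_iff_less measurable_Kborel_iff by blast

lemma borel_measurable_v:
  assumes "f \<in> measurable N (Kborel v)"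
  shows "(\<lambda>w. v (f w)) \<in> borel_measurable N"
  using borel_measurable_v_diff[OF assms, of 0] by simp

context local_field
begin

text \<open>Separability lets each ball condition on \<open>f - g\<close> be written as a countable union of
  ball conditions on \<open>f\<close> and \<open>g\<close> separately.\<close>

lemma measurable_Kborel_diff [measurable]:
  assumes f: "f \<in> measurable N (Kborel v)" and g: "g \<in> measurable N (Kborel v)"
  shows "(\<lambda>w. f w - g w) \<in> measurable N (Kborel v)"
proof -
  obtain D where "countable D" and dense: "\<And>y e. 0 < e \<Longrightarrow> \<exists>d\<in>D. v (y - d) < e"
    using countable_dense by blast
  define B where "B x r = (\<Union>d\<in>D. {w \<in> space N. v (f w - d) < r \<and> v (g w - (d - x)) < r})"
    for x r
  have ball_eq: "{w \<in> space N. v (f w - g w - x) < r} = B x r" for x r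
  proof (intro equalityI subsetI)
    fix w assume w: "w \<in> {w \<in> space N. v (f w - g w - x) < r}"
    then have "0 < r"
      using le_less_trans[OF v_nonneg] by blast
    then obtain d where d: "d \<in> D" "v (f w - d) < r"
      using dense by blast
    have "g w - (d - x) = (f w - d) - (f w - g w - x)"
      by (simp add: algebra_simps)
    then have "v (g w - (d - x)) \<le> max (v (f w - d)) (v (f w - g w - x))"
      by (metis v_diff_le_max)
    with d w show "w \<in> B x r"
      unfolding B_def by auto
  next
    fix w assume "w \<in> B x r"
    then obtain d where d: "w \<in> space N" "v (f w - d) < r" "v (g w - (d - x)) < r"
      unfolding B_def by blast
    have "f w - g w - x = (f w - d) - (g w - (d - x))"
      by (simp add: algebra_simps)
    then have "v (f w - g w - x) \<le> max (v (f w - d)) (v (g w - (d - x)))"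
      by (metis v_diff_le_max)
    with d show "w \<in> {w \<in> space N. v (f w - g w - x) < r}"
      by auto
  qed
  have [measurable]: "(\<lambda>w. v (f w - c)) \<in> borel_measurable N" "(\<lambda>w. v (g w - c)) \<in> borel_measurable N"
    for c
    using f g by (simp_all add: borel_measurable_v_diff)
  have "B x r \<in> sets N" for x r
    unfolding B_def by (intro sets.countable_UN'' \<open>countable D\<close>) measurable
  then show ?thesis
    unfolding measurable_Kborel_iff ball_eq by simp
qed

lemma v_Cauchy_iff_nat:
  "v_Cauchy s \<longleftrightarrow> (\<forall>j::nat. \<exists>N. \<forall>n\<ge>N. \<forall>m\<ge>N. v (s n - s m) < 1 / real (Suc j))"
proof
  assume "\<forall>j::nat. \<exists>N. \<forall>n\<ge>N. \<forall>m\<ge>N. v (s n - s m) < 1 / real (Suc j)"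
  moreover have "\<exists>j::nat. 1 / real (Suc j) < e" if "0 < e" for e
    using reals_Archimedean[OF that] by (simp add: inverse_eq_divide)
  ultimately show "v_Cauchy s"
    unfolding v_Cauchy_def by (meson less_trans)
qed (simp add: v_Cauchy_def)

lemma measurable_v_lim:
  assumes W: "\<And>n. W n \<in> measurable N (Kborel v)"
  shows "(\<lambda>w. v_lim (\<lambda>n. W n w)) \<in> measurable N (Kborel v)"
proof -
  have [measurable]: "(\<lambda>w. v (W n w - W m w)) \<in> borel_measurable N" for n m
    by (intro borel_measurable_v measurable_Kborel_diff W)
  have [measurable]: "(\<lambda>w. v (W n w - x)) \<in> borel_measurable N" for n x
    by (intro borel_measurable_v_diff W)
  have [measurable]: "{w \<in> space N. v_Cauchy (\<lambda>n. W n w)} \<in> sets N"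
    unfolding v_Cauchy_iff_nat by measurable
  have "{w \<in> space N. v (v_lim (\<lambda>n. W n w) - x) < r} =
      {w \<in> space N. v_Cauchy (\<lambda>n. W n w) \<and>
        (\<exists>q::rat. real_of_rat q < r \<and> (\<exists>N. \<forall>n\<ge>N. v (W n w - x) \<le> real_of_rat q))} \<union>
      {w \<in> space N. \<not> v_Cauchy (\<lambda>n. W n w) \<and> v (0 - x) < r}" for x r
    using v_lim_less_iff by (auto simp: v_lim_def)
  moreover have "{w \<in> space N. v_Cauchy (\<lambda>n. W n w) \<and>
        (\<exists>q::rat. real_of_rat q < r \<and> (\<exists>N. \<forall>n\<ge>N. v (W n w - x) \<le> real_of_rat q))} \<union>
      {w \<in> space N. \<not> v_Cauchy (\<lambda>n. W n w) \<and> v (0 - x) < r} \<in> sets N" for x r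
    by measurable
  ultimately show ?thesis
    unfolding measurable_Kborel_iff by simp
qed

end

section \<open>The conditional essential supremum\<close>

context finite_measure_subalgebra
begin

lemma measurable_cond_esssup [measurable]: "cond_esssup M F S \<in> borel_measurable F"
  unfolding cond_esssup_def by measurable

lemma integrable_bounded_power:
  fixes S :: "'a \<Rightarrow> real"
  assumes "S \<in> borel_measurable M" "\<And>w. 0 \<le> S w" "AE w in M. S w \<le> C"
  shows "integrable M (\<lambda>w. S w ^ p)"
proof (rule integrable_const_bound[where B = "C ^ p"])
  show "AE w in M. norm (S w ^ p) \<le> C ^ p"
    using assms(3) by eventually_elim (simp add: assms(2) power_mono)
qed (use assms(1) in measurable)

lemma cond_esssup_nonneg:
  fixes S :: "'a \<Rightarrow> real"
  assumes "S \<in> borel_measurable M" "\<And>w. 0 \<le> S w"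
  shows "AE w in M. 0 \<le> cond_esssup M F S w"
proof -
  have "AE w in M. 0 \<le> real_cond_exp M F (\<lambda>w. S w ^ 1) w"
    using assms by (intro real_cond_exp_pos) auto
  then show ?thesis
  proof eventually_elim
    case (elim w)
    have "ereal (root 1 (real_cond_exp M F (\<lambda>w. S w ^ 1) w)) \<le> cond_esssup M F S w"
      unfolding cond_esssup_def by (rule SUP_upper) auto
    with elim show ?case
      by (simp add: order_trans[rotated])
  qed
qed

text \<open>The conditional essential supremum is below every \<open>F\<close>-measurable majorant, since
  \<open>E[S^p|F] \<le> E[T^p|F] = T^p\<close> for a (truncated) majorant \<open>T\<close>.\<close>

lemma cond_esssup_least:
  fixes S :: "'a \<Rightarrow> real" and T :: "'a \<Rightarrow> ereal"
  assumes S: "S \<in> borel_measurable M" "\<And>w. 0 \<le> S w" "AE w in M. S w \<le> C" "0 \<le> C"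
    and T: "T \<in> borel_measurable F" "AE w in M. ereal (S w) \<le> T w"
  shows "AE w in M. cond_esssup M F S w \<le> T w"
proof -
  define T' where "T' w = (if ereal C \<le> T w then C else max 0 (real_of_ereal (T w)))" for w
  have T'_F: "T' \<in> borel_measurable F"
    unfolding T'_def using T(1) by measurable
  have T'_bounds: "0 \<le> T' w" "T' w \<le> C" for w
    unfolding T'_def using S(4) by (cases "T w"; simp)+
  have between: "AE w in M. S w \<le> T' w \<and> ereal (T' w) \<le> T w"
    using S(3) T(2)
  proof eventually_elim
    case (elim w)
    with S(2)[of w] show ?case
      unfolding T'_def by (cases "T w") auto
  qed
  have int_T': "integrable M (\<lambda>w. T' w ^ p)" for p
    using T'_bounds measurable_from_subalg[OF subalg T'_F]
    by (intro integrable_bounded_power[where C = C]) auto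
  have int_S: "integrable M (\<lambda>w. S w ^ p)" for p
    using S(1-3) by (rule integrable_bounded_power)
  have "AE w in M. 1 \<le> p \<longrightarrow> root p (real_cond_exp M F (\<lambda>w. S w ^ p) w) \<le> T' w" for p :: nat
  proof -
    have "AE w in M. real_cond_exp M F (\<lambda>w. S w ^ p) w \<le> real_cond_exp M F (\<lambda>w. T' w ^ p) w"
      using between by (intro real_cond_exp_mono int_S int_T')
        (auto elim!: eventually_mono simp: S(2) power_mono)
    moreover have "AE w in M. real_cond_exp M F (\<lambda>w. T' w ^ p) w = T' w ^ p"
      using T'_F by (intro real_cond_exp_F_meas int_T') measurable
    ultimately show ?thesis
    proof eventually_elim
      case (elim w)
      then show ?case
        using T'_bounds(1)[of w] real_root_le_iff[of p _ "T' w ^ p"]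
        by (auto simp: real_root_power_cancel)
    qed
  qed
  then have "AE w in M. \<forall>p::nat. 1 \<le> p \<longrightarrow> root p (real_cond_exp M F (\<lambda>w. S w ^ p) w) \<le> T' w"
    by (simp add: AE_all_countable)
  with between show ?thesis
  proof eventually_elim
    case (elim w)
    then have "cond_esssup M F S w \<le> ereal (T' w)"
      unfolding cond_esssup_def by (intro SUP_least) auto
    with elim show ?case
      by (meson order_trans)
  qed
qed

lemma integral_indicator_power_le:
  fixes S :: "'a \<Rightarrow> real"
  assumes S: "S \<in> borel_measurable M" "\<And>w. 0 \<le> S w" "AE w in M. S w \<le> C"
    and A: "A \<in> sets F" "\<And>w. w \<in> A \<Longrightarrow> cond_esssup M F S w \<le> ereal c"
    and "0 < c" "1 \<le> p"
  shows "(\<integral>w. indicator A w * S w ^ p \<partial>M) \<le> measure M A * c ^ p"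
proof -
  let ?E = "real_cond_exp M F (\<lambda>w. S w ^ p)"
  have A_M: "A \<in> sets M"
    using A(1) subalg by (simp add: subalgebra_def subset_eq)
  have int_S: "integrable M (\<lambda>w. S w ^ p)"
    using S by (rule integrable_bounded_power)
  have cond_exp: "integrable M (\<lambda>w. indicator A w * ?E w)"
    "(\<integral>w. indicator A w * ?E w \<partial>M) = (\<integral>w. indicator A w * S w ^ p \<partial>M)"
    using integrable_mult_indicator[OF A_M int_S] A(1) S(1)
    by (intro real_cond_exp_intg; simp)+
  have "?E w \<le> c ^ p" if "w \<in> A" for w
  proof -
    have "ereal (root p (?E w)) \<le> cond_esssup M F S w"
      unfolding cond_esssup_def using \<open>1 \<le> p\<close> by (intro SUP_upper) auto
    with A(2)[OF that] have "root p (?E w) \<le> c"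
      using order_trans ereal_less_eq(3) by blast
    then have "root p (?E w) \<le> root p (c ^ p)"
      using \<open>0 < c\<close> \<open>1 \<le> p\<close> by (simp add: real_root_power_cancel)
    then show ?thesis
      using \<open>1 \<le> p\<close> by simp
  qed
  then have "indicator A w * ?E w \<le> indicator A w * c ^ p" for w
    by (cases "w \<in> A") auto
  moreover have "integrable M (\<lambda>w. indicator A w * c ^ p :: real)"
    using A_M by (simp add: emeasure_finite less_top[symmetric])
  ultimately have "(\<integral>w. indicator A w * ?E w \<partial>M) \<le> (\<integral>w. indicator A w * c ^ p \<partial>M)"
    using cond_exp(1) by (intro integral_mono)
  with cond_exp(2) A_M show ?thesis
    by simp
qed

text \<open>Markov's inequality for every moment: the set where \<open>S > d\<close> but the conditional
  essential supremum is at most \<open>c\<close> has measure at most \<open>\<mu>(\<Omega>) (c/d)^p\<close> for all \<open>p\<close>.\<close>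

lemma AE_le_of_cond_esssup_le:
  fixes S :: "'a \<Rightarrow> real"
  assumes S: "S \<in> borel_measurable M" "\<And>w. 0 \<le> S w" "AE w in M. S w \<le> C"
    and "0 < c" "c < d"
  shows "AE w in M. cond_esssup M F S w \<le> ereal c \<longrightarrow> S w \<le> d"
proof -
  define A where "A = {w \<in> space M. cond_esssup M F S w \<le> ereal c}"
  define B where "B = {w \<in> A. d < S w}"
  have "A = {w \<in> space F. cond_esssup M F S w \<le> ereal c}"
    using subalg by (simp add: A_def subalgebra_def)
  then have A_F: "A \<in> sets F"
    by simp
  then have A_M: "A \<in> sets M"
    using subalg by (auto simp: subalgebra_def)
  then have B_M: "B \<in> sets M"
    using measurable_from_subalg[OF subalg measurable_cond_esssup] S(1)
    unfolding B_def A_def by measurable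
  have bound: "d ^ p * measure M B \<le> measure M (space M) * c ^ p" if "1 \<le> p" for p :: nat
  proof -
    have "d ^ p * measure M B = (\<integral>w. indicator B w * d ^ p \<partial>M)"
      using B_M by simp
    also have "\<dots> \<le> (\<integral>w. indicator A w * S w ^ p \<partial>M)"
    proof (rule integral_mono)
      show "integrable M (\<lambda>w. indicator B w * d ^ p :: real)"
        using B_M by (simp add: emeasure_finite less_top[symmetric])
      show "integrable M (\<lambda>w. indicator A w * S w ^ p)"
        using integrable_mult_indicator[OF A_M integrable_bounded_power[OF S]] by simp
      show "indicator B w * d ^ p \<le> indicator A w * S w ^ p" for w
        using \<open>0 < c\<close> \<open>c < d\<close> S(2)[of w]
        by (auto simp: indicator_def B_def intro!: power_mono)
    qed
    also have "\<dots> \<le> measure M A * c ^ p"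
      using S A_F \<open>0 < c\<close> that by (intro integral_indicator_power_le) (auto simp: A_def)
    also have "\<dots> \<le> measure M (space M) * c ^ p"
      using \<open>0 < c\<close> by (intro mult_right_mono bounded_measure) auto
    finally show ?thesis .
  qed
  have "measure M B \<le> measure M (space M) * (c / d) ^ Suc p" for p
  proof -
    have "0 < d ^ Suc p"
      using \<open>0 < c\<close> \<open>c < d\<close> by simp
    with bound[of "Suc p"] show ?thesis
      by (simp add: power_divide field_simps del: power_Suc)
  qed
  moreover have "(\<lambda>p. measure M (space M) * (c / d) ^ Suc p) \<longlonglongrightarrow> 0"
    using \<open>0 < c\<close> \<open>c < d\<close> by (intro tendsto_mult_right_zero LIMSEQ_Suc LIMSEQ_power_zero) simp
  ultimately have "measure M B \<le> 0"
    using LIMSEQ_le_const by blast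
  then have "B \<in> null_sets M"
    using B_M by (simp add: null_sets_def emeasure_eq_measure measure_nonneg antisym)
  then show ?thesis
    by (rule AE_I') (auto simp: A_def B_def)
qed

lemma cond_esssup_upper:
  fixes S :: "'a \<Rightarrow> real"
  assumes S: "S \<in> borel_measurable M" "\<And>w. 0 \<le> S w" "AE w in M. S w \<le> C"
  shows "AE w in M. ereal (S w) \<le> cond_esssup M F S w"
proof -
  have "AE w in M. \<forall>c d::rat. 0 < c \<longrightarrow> c < d \<longrightarrow>
      cond_esssup M F S w \<le> ereal (of_rat c) \<longrightarrow> S w \<le> of_rat d"
    unfolding AE_all_countable
    using AE_le_of_cond_esssup_le[OF S, of "of_rat _" "of_rat _"] by (auto simp: of_rat_less)
  with cond_esssup_nonneg[OF S(1,2)] show ?thesis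
  proof eventually_elim
    case (elim w)
    show ?case
    proof (rule ccontr)
      assume "\<not> ereal (S w) \<le> cond_esssup M F S w"
      then have less: "cond_esssup M F S w < ereal (S w)"
        by simp
      with elim(1) obtain q where q: "cond_esssup M F S w = ereal q"
        by (cases "cond_esssup M F S w") auto
      with elim(1) less have "0 \<le> q" "q < S w"
        by auto
      obtain c :: rat where c: "q < of_rat c" "of_rat c < S w"
        using of_rat_dense[OF \<open>q < S w\<close>] by blast
      obtain d :: rat where d: "of_rat c < (of_rat d :: real)" "of_rat d < S w"
        using of_rat_dense[OF c(2)] by blast
      have "0 < c"
        using \<open>0 \<le> q\<close> c(1) zero_less_of_rat_iff[of c, where 'a = real] by linarith
      then have "S w \<le> of_rat d"
        using elim(2)[rule_format, of c d] q c d by (simp add: of_rat_less)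
      with d show False
        by simp
    qed
  qed
qed

end

section \<open>Bounded random variables and conditional norms\<close>

lemma Linf_bounded:
  assumes "Z \<in> Linf M N v"
  obtains C where "0 \<le> C" "AE w in M. v (Z w) \<le> C"
proof -
  obtain C where "AE w in M. v (Z w) \<le> C"
    using assms unfolding Linf_def by blast
  then have "AE w in M. v (Z w) \<le> max C 0"
    by (auto elim!: eventually_mono)
  then show ?thesis
    using that[of "max C 0"] by simp
qed

lemma Linf_mono:
  assumes "subalgebra N N'"
  shows "Linf M N' v \<subseteq> Linf M N v"
  using measurable_from_subalg[OF assms] unfolding Linf_def by blast

lemma (in local_field) Linf_diff:
  assumes "X \<in> Linf M N v" "Z \<in> Linf M N v"
  shows "(\<lambda>w. X w - Z w) \<in> Linf M N v"
proof -
  obtain CX CZ where "AE w in M. v (X w) \<le> CX" "AE w in M. v (Z w) \<le> CZ"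
    using assms unfolding Linf_def by blast
  then have "AE w in M. v (X w - Z w) \<le> max CX CZ"
  proof eventually_elim
    case (elim w)
    then have "max (v (X w)) (v (Z w)) \<le> max CX CZ"
      by (rule max.mono)
    with v_diff_le_max[of "X w" "Z w"] show ?case
      by (rule order_trans)
  qed
  with assms show ?thesis
    unfolding Linf_def by auto
qed

lemma Linf_If:
  assumes "Z1 \<in> Linf M N v" "Z2 \<in> Linf M N v" "{w \<in> space N. P w} \<in> sets N"
  shows "(\<lambda>w. if P w then Z1 w else Z2 w) \<in> Linf M N v"
proof -
  obtain C1 C2 where "AE w in M. v (Z1 w) \<le> C1" "AE w in M. v (Z2 w) \<le> C2"
    using assms(1,2) unfolding Linf_def by blast
  then have "AE w in M. v (if P w then Z1 w else Z2 w) \<le> max C1 C2"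
    by eventually_elim auto
  moreover have "(\<lambda>w. if P w then Z1 w else Z2 w) \<in> measurable N (Kborel v)"
    using assms unfolding Linf_def by (auto intro: measurable_If)
  ultimately show ?thesis
    unfolding Linf_def by blast
qed

locale nonarch_subalgebra = nonarch_abs_field v + finite_measure_subalgebra M F
  for v :: "'k::field \<Rightarrow> real" and M F :: "'a measure"
begin

lemma measurable_cnorm [measurable]: "cnorm M F v U \<in> borel_measurable F"
  unfolding cnorm_def by measurable

lemma cnorm_nonneg:
  assumes "U \<in> Linf M M v"
  shows "AE w in M. 0 \<le> cnorm M F v U w"
  using assms unfolding cnorm_def Linf_def by (intro cond_esssup_nonneg borel_measurable_v) auto

lemma cnorm_upper:
  assumes "U \<in> Linf M M v"
  shows "AE w in M. ereal (v (U w)) \<le> cnorm M F v U w"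
proof -
  obtain C where "AE w in M. v (U w) \<le> C"
    using assms unfolding Linf_def by blast
  with assms show ?thesis
    unfolding cnorm_def Linf_def by (intro cond_esssup_upper borel_measurable_v) auto
qed

lemma cnorm_least:
  assumes "U \<in> Linf M M v" "T \<in> borel_measurable F" "AE w in M. ereal (v (U w)) \<le> T w"
  shows "AE w in M. cnorm M F v U w \<le> T w"
proof -
  obtain C where "0 \<le> C" "AE w in M. v (U w) \<le> C"
    using assms(1) by (rule Linf_bounded)
  with assms show ?thesis
    unfolding cnorm_def Linf_def by (intro cond_esssup_least borel_measurable_v) auto
qed

lemma cnorm_bounded:
  assumes "U \<in> Linf M M v"
  obtains C where "AE w in M. 0 \<le> cnorm M F v U w \<and> cnorm M F v U w \<le> ereal C"
proof -
  obtain C where "0 \<le> C" "AE w in M. v (U w) \<le> C"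
    using assms by (rule Linf_bounded)
  then have "AE w in M. cnorm M F v U w \<le> ereal C"
    using assms by (intro cnorm_least) auto
  with cnorm_nonneg[OF assms] have "AE w in M. 0 \<le> cnorm M F v U w \<and> cnorm M F v U w \<le> ereal C"
    by eventually_elim simp
  then show ?thesis
    by (rule that)
qed

end

section \<open>Existence of best approximations\<close>

locale best_approximation = local_field v + nonarch_subalgebra v M F
  for v :: "'k::field \<Rightarrow> real" and M F :: "'a measure" +
  fixes X :: "'a \<Rightarrow> 'k"
  assumes X_Linf: "X \<in> Linf M M v"
begin

definition approx_err :: "('a \<Rightarrow> 'k) \<Rightarrow> 'a \<Rightarrow> ereal" where
  "approx_err Z = cnorm M F v (\<lambda>w. X w - Z w)"

definition mean_err :: "('a \<Rightarrow> 'k) \<Rightarrow> real" where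
  "mean_err Z = (\<integral>w. real_of_ereal (approx_err Z w) \<partial>M)"

lemma diff_Linf: "Z \<in> Linf M F v \<Longrightarrow> (\<lambda>w. X w - Z w) \<in> Linf M M v"
  using Linf_mono[OF subalg] X_Linf by (blast intro: Linf_diff)

lemma measurable_approx_err [measurable]: "approx_err Z \<in> borel_measurable F"
  unfolding approx_err_def by (rule measurable_cnorm)

lemma approx_err_upper:
  "Z \<in> Linf M F v \<Longrightarrow> AE w in M. ereal (v (X w - Z w)) \<le> approx_err Z w"
  unfolding approx_err_def by (rule cnorm_upper[OF diff_Linf])

lemma approx_err_least:
  "Z \<in> Linf M F v \<Longrightarrow> T \<in> borel_measurable F \<Longrightarrow> AE w in M. ereal (v (X w - Z w)) \<le> T w \<Longrightarrow>
    AE w in M. approx_err Z w \<le> T w"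
  unfolding approx_err_def by (rule cnorm_least[OF diff_Linf])

lemma approx_err_bounded:
  assumes "Z \<in> Linf M F v"
  obtains C where "AE w in M. 0 \<le> approx_err Z w \<and> approx_err Z w \<le> ereal C"
  unfolding approx_err_def using cnorm_bounded[OF diff_Linf[OF assms]] by blast

lemma approx_err_nonneg: "Z \<in> Linf M F v \<Longrightarrow> AE w in M. 0 \<le> approx_err Z w"
  unfolding approx_err_def by (rule cnorm_nonneg[OF diff_Linf])

text \<open>Each error is the least \<open>F\<close>-measurable majorant of its pointwise error; comparing it
  with suitably pasted errors gives the inequalities in both directions.\<close>

lemma approx_err_If:
  assumes Z1: "Z1 \<in> Linf M F v" and Z2: "Z2 \<in> Linf M F v" and P: "{w \<in> space F. P w} \<in> sets F"
  defines "Z \<equiv> \<lambda>w. if P w then Z1 w else Z2 w"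
  shows "Z \<in> Linf M F v"
    and "AE w in M. approx_err Z w = (if P w then approx_err Z1 w else approx_err Z2 w)"
proof -
  show Z: "Z \<in> Linf M F v"
    unfolding Z_def using Z1 Z2 P by (rule Linf_If)
  have If_F: "(\<lambda>w. if P w then f w else g w) \<in> borel_measurable F"
    if "f \<in> borel_measurable F" "g \<in> borel_measurable F" for f g :: "'a \<Rightarrow> ereal"
    using that P by (rule measurable_If)
  have "AE w in M. approx_err Z w \<le> (if P w then approx_err Z1 w else approx_err Z2 w)"
    using approx_err_upper[OF Z1] approx_err_upper[OF Z2]
    by (intro approx_err_least[OF Z] If_F measurable_approx_err) (auto simp: Z_def)
  moreover have "AE w in M. approx_err Z1 w \<le> (if P w then approx_err Z w else approx_err Z1 w)"
    using approx_err_upper[OF Z1] approx_err_upper[OF Z]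
    by (intro approx_err_least[OF Z1] If_F measurable_approx_err) (auto simp: Z_def)
  moreover have "AE w in M. approx_err Z2 w \<le> (if P w then approx_err Z2 w else approx_err Z w)"
    using approx_err_upper[OF Z2] approx_err_upper[OF Z]
    by (intro approx_err_least[OF Z2] If_F measurable_approx_err) (auto simp: Z_def)
  ultimately show "AE w in M. approx_err Z w = (if P w then approx_err Z1 w else approx_err Z2 w)"
    by eventually_elim (auto split: if_splits)
qed

lemma approx_err_min:
  assumes "Z1 \<in> Linf M F v" "Z2 \<in> Linf M F v"
  defines "Z \<equiv> \<lambda>w. if approx_err Z1 w < approx_err Z2 w then Z1 w else Z2 w"
  shows "Z \<in> Linf M F v" and "AE w in M. approx_err Z w = min (approx_err Z1 w) (approx_err Z2 w)"
proof -
  have "{w \<in> space F. approx_err Z1 w < approx_err Z2 w} \<in> sets F"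
    by measurable
  from approx_err_If[OF assms(1,2) this] show "Z \<in> Linf M F v"
    and "AE w in M. approx_err Z w = min (approx_err Z1 w) (approx_err Z2 w)"
    unfolding Z_def by (auto elim!: eventually_mono simp: min_def)
qed

lemma integrable_approx_err:
  assumes "Z \<in> Linf M F v"
  shows "integrable M (\<lambda>w. real_of_ereal (approx_err Z w))"
proof -
  obtain C where C: "AE w in M. 0 \<le> approx_err Z w \<and> approx_err Z w \<le> ereal C"
    using approx_err_bounded[OF assms] .
  show ?thesis
  proof (rule integrable_const_bound[where B = C])
    show "AE w in M. norm (real_of_ereal (approx_err Z w)) \<le> C"
      using C by eventually_elim (case_tac "approx_err Z w"; auto)
    show "(\<lambda>w. real_of_ereal (approx_err Z w)) \<in> borel_measurable M"
      using measurable_from_subalg[OF subalg measurable_approx_err] by measurable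
  qed
qed

lemma mean_err_nonneg:
  assumes "Z \<in> Linf M F v"
  shows "0 \<le> mean_err Z"
proof -
  obtain C where "AE w in M. 0 \<le> approx_err Z w \<and> approx_err Z w \<le> ereal C"
    using approx_err_bounded[OF assms] .
  then show ?thesis
    unfolding mean_err_def by (intro integral_nonneg_AE) (auto elim!: eventually_mono simp: real_of_ereal_pos)
qed

lemma mean_err_mono:
  assumes Z1: "Z1 \<in> Linf M F v" and Z2: "Z2 \<in> Linf M F v"
    and le: "AE w in M. approx_err Z1 w \<le> approx_err Z2 w"
  shows "mean_err Z1 \<le> mean_err Z2"
proof -
  obtain C where "AE w in M. 0 \<le> approx_err Z2 w \<and> approx_err Z2 w \<le> ereal C"
    using approx_err_bounded[OF Z2] .
  with le approx_err_nonneg[OF Z1]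
  have "AE w in M. real_of_ereal (approx_err Z1 w) \<le> real_of_ereal (approx_err Z2 w)"
    by eventually_elim (auto intro: real_of_ereal_positive_mono)
  then show ?thesis
    unfolding mean_err_def using Z1 Z2 by (intro integral_mono_AE integrable_approx_err)
qed

lemma AE_approx_err_eq_of_mean_err_le:
  assumes Z1: "Z1 \<in> Linf M F v" and Z2: "Z2 \<in> Linf M F v"
    and le: "AE w in M. approx_err Z1 w \<le> approx_err Z2 w" and "mean_err Z2 \<le> mean_err Z1"
  shows "AE w in M. approx_err Z1 w = approx_err Z2 w"
proof -
  define f where "f w = real_of_ereal (approx_err Z2 w) - real_of_ereal (approx_err Z1 w)" for w
  obtain C where C: "AE w in M. 0 \<le> approx_err Z2 w \<and> approx_err Z2 w \<le> ereal C"
    using approx_err_bounded[OF Z2] .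
  have finite: "AE w in M. \<bar>approx_err Z1 w\<bar> \<noteq> \<infinity> \<and> \<bar>approx_err Z2 w\<bar> \<noteq> \<infinity>"
    using le C approx_err_nonneg[OF Z1] by eventually_elim auto
  have f_nonneg: "AE w in M. 0 \<le> f w"
    using le C approx_err_nonneg[OF Z1]
    by eventually_elim (auto simp: f_def intro: real_of_ereal_positive_mono)
  have f_int: "integrable M f"
    unfolding f_def using Z1 Z2 by (intro Bochner_Integration.integrable_diff integrable_approx_err)
  have "integral\<^sup>L M f = mean_err Z2 - mean_err Z1"
    unfolding f_def mean_err_def using Z1 Z2 by (intro Bochner_Integration.integral_diff integrable_approx_err)
  with \<open>mean_err Z2 \<le> mean_err Z1\<close> integral_nonneg_AE[OF f_nonneg] have "integral\<^sup>L M f = 0"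
    by linarith
  then have "AE w in M. f w = 0"
    using integral_nonneg_eq_0_iff_AE[OF f_int f_nonneg] by simp
  with finite show ?thesis
  proof eventually_elim
    case (elim w)
    then show ?case
      by (cases "approx_err Z1 w"; cases "approx_err Z2 w"; simp add: f_def)
  qed
qed

lemma bdd_below_mean_err: "bdd_below (mean_err ` Linf M F v)"
  by (rule bdd_belowI[where m = 0]) (auto simp: mean_err_nonneg)

lemma exists_decreasing_minimizing_seq:
  "\<exists>W. (\<forall>n. W n \<in> Linf M F v) \<and>
    (\<forall>n. AE w in M. approx_err (W (Suc n)) w \<le> approx_err (W n) w) \<and>
    (\<forall>n. mean_err (W n) < (INF Z\<in>Linf M F v. mean_err Z) + 1 / real (Suc n))"
proof -
  let ?m = "INF Z\<in>Linf M F v. mean_err Z"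
  have "(\<lambda>w. 0) \<in> Linf M F v"
    unfolding Linf_def by auto
  then have "\<exists>Z\<in>Linf M F v. mean_err Z < ?m + 1 / real (Suc n)" for n
    using cINF_less_iff[OF _ bdd_below_mean_err, of "?m + 1 / real (Suc n)"] by auto
  then obtain Zs where Zs: "\<And>n. Zs n \<in> Linf M F v" "\<And>n. mean_err (Zs n) < ?m + 1 / real (Suc n)"
    by metis
  define W where "W = rec_nat (Zs 0)
    (\<lambda>n Wn w. if approx_err (Zs (Suc n)) w < approx_err Wn w then Zs (Suc n) w else Wn w)"
  have W_0: "W 0 = Zs 0"
    and W_Suc: "W (Suc n) = (\<lambda>w. if approx_err (Zs (Suc n)) w < approx_err (W n) w then Zs (Suc n) w else W n w)"
    for n unfolding W_def by simp_all
  have W: "W n \<in> Linf M F v" for n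
    by (induction n) (simp_all add: W_0 W_Suc Zs(1) approx_err_min(1))
  have W_min: "AE w in M. approx_err (W (Suc n)) w = min (approx_err (Zs (Suc n)) w) (approx_err (W n) w)" for n
    unfolding W_Suc by (rule approx_err_min(2)[OF Zs(1) W])
  have "AE w in M. approx_err (W n) w \<le> approx_err (Zs n) w" for n
  proof (cases n)
    case (Suc k)
    then show ?thesis
      using W_min[of k] by (auto elim!: eventually_mono)
  qed (simp add: W_0)
  then have "mean_err (W n) < ?m + 1 / real (Suc n)" for n
    using mean_err_mono[OF W Zs(1)] Zs(2) le_less_trans by blast
  moreover have "AE w in M. approx_err (W (Suc n)) w \<le> approx_err (W n) w" for n
    using W_min[of n] by (auto elim!: eventually_mono)
  ultimately show ?thesis
    using W by blast
qed

text \<open>The approximation is chosen pointwise as in \<open>approx_point_le_INF\<close>; it is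
  \<open>F\<close>-measurable because it is built from the \<open>W n\<close> by countable operations.\<close>

lemma exists_approx_below_INF:
  assumes W: "\<And>n. W n \<in> Linf M F v"
    and dec: "\<And>n. AE w in M. approx_err (W (Suc n)) w \<le> approx_err (W n) w"
  shows "\<exists>Z\<in>Linf M F v. AE w in M. approx_err Z w \<le> (INF n. approx_err (W n) w)"
proof -
  define e where "e w = (INF n. approx_err (W n) w)" for w
  define P where "P w k \<longleftrightarrow> (\<forall>n\<ge>k. ereal (v (W n w - W k w)) \<le> e w)" for w k
  define Z where
    "Z w = (if 0 < e w \<and> (\<exists>k. P w k) then W (LEAST k. P w k) w else v_lim (\<lambda>n. W n w))" for w
  have W_F [measurable]: "W n \<in> measurable F (Kborel v)" for n
    using W unfolding Linf_def by blast
  have [measurable]: "(\<lambda>w. v (W n w - W k w)) \<in> borel_measurable F" for n k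
    by (intro borel_measurable_v measurable_Kborel_diff W_F)
  have e_F [measurable]: "e \<in> borel_measurable F"
    unfolding e_def by measurable
  have Z_F: "Z \<in> measurable F (Kborel v)"
    unfolding Z_def
  proof (rule measurable_If)
    show "(\<lambda>w. W (LEAST k. P w k) w) \<in> measurable F (Kborel v)"
      by (rule measurable_compose_countable[OF W_F]) (unfold P_def, measurable)
    show "(\<lambda>w. v_lim (\<lambda>n. W n w)) \<in> measurable F (Kborel v)"
      by (rule measurable_v_lim[OF W_F])
    show "{w \<in> space F. 0 < e w \<and> (\<exists>k. P w k)} \<in> sets F"
      unfolding P_def by measurable
  qed
  obtain B where B: "AE w in M. 0 \<le> approx_err (W 0) w \<and> approx_err (W 0) w \<le> ereal B"
    using approx_err_bounded[OF W] .
  have "AE w in M. \<forall>n. ereal (v (X w - W n w)) \<le> approx_err (W n) w"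
    using approx_err_upper[OF W] by (simp add: AE_all_countable)
  moreover have "AE w in M. decseq (\<lambda>n. approx_err (W n) w)"
    using dec unfolding decseq_Suc_iff by (simp add: AE_all_countable)
  moreover have "AE w in M. \<forall>n. 0 \<le> approx_err (W n) w"
    using approx_err_nonneg[OF W] by (simp add: AE_all_countable)
  ultimately have close: "AE w in M. ereal (v (X w - Z w)) \<le> e w"
    using B
  proof eventually_elim
    case (elim w)
    then have "approx_err (W 0) w \<noteq> \<infinity>"
      by auto
    with elim show ?case
      unfolding Z_def P_def e_def by (intro approx_point_le_INF) (simp_all add: decseq_def)
  qed
  obtain CX where CX: "AE w in M. v (X w) \<le> CX"
    using X_Linf unfolding Linf_def by blast
  have "AE w in M. v (Z w) \<le> max CX B"
    using close B CX
  proof eventually_elim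
    case (elim w)
    have "e w \<le> approx_err (W 0) w"
      unfolding e_def by (rule INF_lower) simp
    with elim have "v (X w - Z w) \<le> B"
      by (metis ereal_less_eq(3) order_trans)
    moreover have "v (Z w) \<le> max (v (X w)) (v (X w - Z w))"
      using v_diff_le_max[of "X w" "X w - Z w"] by simp
    ultimately show ?case
      using elim by linarith
  qed
  with Z_F have Z: "Z \<in> Linf M F v"
    unfolding Linf_def by blast
  show ?thesis
    using approx_err_least[OF Z e_F close] Z unfolding e_def by blast
qed

text \<open>A minimiser of the mean error is a best approximation: otherwise pasting in a better
  approximation where it is better would lower the mean error.\<close>

lemma best_of_minimal_mean_err:
  assumes Z: "Z \<in> Linf M F v" and minimal: "\<And>Z'. Z' \<in> Linf M F v \<Longrightarrow> mean_err Z \<le> mean_err Z'"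
  shows "\<forall>Z'\<in>Linf M F v. AE w in M. approx_err Z w \<le> approx_err Z' w"
proof
  fix Z' assume Z': "Z' \<in> Linf M F v"
  define Zm where "Zm = (\<lambda>w. if approx_err Z' w < approx_err Z w then Z' w else Z w)"
  have Zm: "Zm \<in> Linf M F v" "AE w in M. approx_err Zm w = min (approx_err Z' w) (approx_err Z w)"
    unfolding Zm_def by (rule approx_err_min[OF Z' Z])+
  then have "AE w in M. approx_err Zm w \<le> approx_err Z w"
    by (auto elim!: eventually_mono)
  then have "AE w in M. approx_err Zm w = approx_err Z w"
    using AE_approx_err_eq_of_mean_err_le[OF Zm(1) Z] minimal[OF Zm(1)] by blast
  with Zm(2) show "AE w in M. approx_err Z w \<le> approx_err Z' w"
    by eventually_elim (metis min.cobounded1)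
qed

lemma exists_best_approximation:
  "\<exists>Z\<in>Linf M F v. \<forall>Z'\<in>Linf M F v. AE w in M. approx_err Z w \<le> approx_err Z' w"
proof -
  let ?m = "INF Z\<in>Linf M F v. mean_err Z"
  obtain W where W: "\<And>n. W n \<in> Linf M F v"
    "\<And>n. AE w in M. approx_err (W (Suc n)) w \<le> approx_err (W n) w"
    "\<And>n. mean_err (W n) < ?m + 1 / real (Suc n)"
    using exists_decreasing_minimizing_seq by blast
  obtain Z where Z: "Z \<in> Linf M F v" "AE w in M. approx_err Z w \<le> (INF n. approx_err (W n) w)"
    using exists_approx_below_INF[of W] W(1,2) by blast
  have "AE w in M. approx_err Z w \<le> approx_err (W n) w" for n
    using Z(2) by eventually_elim (meson INF_lower UNIV_I order_trans)
  then have "mean_err Z \<le> mean_err (W n)" for n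
    by (rule mean_err_mono[OF Z(1) W(1)])
  have "mean_err Z \<le> ?m + e" if "0 < e" for e
  proof -
    obtain n where "inverse (real (Suc n)) < e"
      using reals_Archimedean[OF \<open>0 < e\<close>] ..
    with \<open>mean_err Z \<le> mean_err (W n)\<close> W(3)[of n] show ?thesis
      by (simp add: inverse_eq_divide)
  qed
  then have "mean_err Z \<le> ?m"
    by (rule field_le_epsilon)
  moreover have "?m \<le> mean_err Z'" if "Z' \<in> Linf M F v" for Z'
    using bdd_below_mean_err that by (rule cINF_lower)
  ultimately have "mean_err Z \<le> mean_err Z'" if "Z' \<in> Linf M F v" for Z'
    using that by fastforce
  then show ?thesis
    using best_of_minimal_mean_err[OF Z(1)] Z(1) by blast
qed

end

lemma best_approximationI:
  assumes "finite_measure M" "local_field_abs v" "X \<in> Linf M M v" "subalgebra M F"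
  shows "best_approximation v M F X"
  using assms
  by (intro best_approximation.intro best_approximation_axioms.intro nonarch_subalgebra.intro
      local_field.intro nonarch_abs_field.intro finite_measure_subalgebra.intro
      finite_measure_subalgebra_axioms.intro) (auto simp: local_field_abs_def)

lemma condE_nonempty:
  assumes "finite_measure M" "local_field_abs v" "X \<in> Linf M M v" "subalgebra M G"
  shows "condE M G v X \<noteq> {}"
proof -
  interpret best_approximation v M G X
    using assms by (rule best_approximationI)
  obtain Z where "Z \<in> Linf M G v" "\<forall>Z'\<in>Linf M G v. AE w in M. approx_err Z w \<le> approx_err Z' w"
    using exists_best_approximation by blast
  then have "Z \<in> condE M G v X"
    unfolding condE_def approx_err_def by simp
  then show ?thesis
    by blast
qed

section \<open>Monotonicity of the approximation error\<close>

lemma cnorm_diff_cond_exp_le: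
  assumes "finite_measure M" "local_field_abs v" "X \<in> Linf M M v"
    and G: "subalgebra M G" and H: "subalgebra M H" and "sets G \<subseteq> sets H"
    and Y: "Y \<in> condE M H v X" and Z: "Z \<in> Linf M G v"
  shows "AE w in M. cnorm M G v (\<lambda>w. Y w - Z w) w \<le> cnorm M G v (\<lambda>w. X w - Z w) w"
proof -
  interpret G: best_approximation v M G X
    using assms(1-3) G by (rule best_approximationI)
  interpret H: best_approximation v M H X
    using assms(1-3) H by (rule best_approximationI)
  have "subalgebra H G"
    using G H \<open>sets G \<subseteq> sets H\<close> by (simp add: subalgebra_def)
  then have Z_H: "Z \<in> Linf M H v"
    using Z Linf_mono by blast
  have Y_H: "Y \<in> Linf M H v"
    using Y unfolding condE_def by blast
  have "AE w in M. ereal (v (X w - Y w)) \<le> H.approx_err Y w"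
    using Y_H by (rule H.approx_err_upper)
  moreover have "AE w in M. H.approx_err Y w \<le> H.approx_err Z w"
    using Y Z_H unfolding condE_def H.approx_err_def by blast
  moreover have "AE w in M. H.approx_err Z w \<le> G.approx_err Z w"
    using Z_H measurable_from_subalg[OF \<open>subalgebra H G\<close> G.measurable_approx_err]
      G.approx_err_upper[OF Z] by (rule H.approx_err_least)
  moreover have "AE w in M. ereal (v (X w - Z w)) \<le> G.approx_err Z w"
    using Z by (rule G.approx_err_upper)
  ultimately have "AE w in M. ereal (v (Y w - Z w)) \<le> G.approx_err Z w"
  proof eventually_elim
    case (elim w)
    have "v (Y w - Z w) \<le> max (v (X w - Y w)) (v (X w - Z w))"
      using G.v_ultrametric[of "Y w" "Z w" "X w"] by (simp add: G.v_minus_commute max.commute)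
    moreover have "ereal (v (X w - Y w)) \<le> G.approx_err Z w"
      using elim(1-3) by (meson order_trans)
    with elim(4) have "ereal (max (v (X w - Y w)) (v (X w - Z w))) \<le> G.approx_err Z w"
      by (simp add: max_def)
    ultimately show ?case
      by (meson ereal_less_eq(3) order_trans)
  qed
  moreover have "(\<lambda>w. Y w - Z w) \<in> Linf M M v"
    using Y_H Z_H Linf_mono[OF H] by (blast intro: G.Linf_diff)
  ultimately show ?thesis
    unfolding G.approx_err_def by (intro G.cnorm_least) simp_all
qed

theorem mainTheorem14:
  fixes M G H :: "'a measure" and v :: "'k::field \<Rightarrow> real"
    and X Y :: "'a \<Rightarrow> 'k"
  assumes "prob_space M"
    and "local_field_abs v"
    and "X \<in> Linf M M v"
    and "subalgebra M G" and "subalgebra M H" and "sets G \<subseteq> sets H"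
    and "Y \<in> condE M H v X"
  shows "AE \<omega> in M. eps M G v Y \<omega> \<le> eps M G v X \<omega>"
proof -
  have finite: "finite_measure M"
    using assms(1) by (simp add: prob_space_def)
  have Y: "Y \<in> Linf M M v"
    using assms(7) Linf_mono[OF assms(5)] unfolding condE_def by blast
  define Z where "Z = (SOME Z. Z \<in> condE M G v X)"
  define W where "W = (SOME W. W \<in> condE M G v Y)"
  have Z: "Z \<in> condE M G v X" and W: "W \<in> condE M G v Y"
    unfolding Z_def W_def using condE_nonempty[OF finite assms(2) _ assms(4)] assms(3) Y
    by (simp_all add: some_in_eq)
  have eps_Y: "eps M G v Y = cnorm M G v (\<lambda>w. Y w - W w)"
    unfolding eps_def W_def ..
  have eps_X: "eps M G v X = cnorm M G v (\<lambda>w. X w - Z w)"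
    unfolding eps_def Z_def ..
  have "AE \<omega> in M. cnorm M G v (\<lambda>w. Y w - W w) \<omega> \<le> cnorm M G v (\<lambda>w. Y w - Z w) \<omega>"
    using W Z unfolding condE_def by blast
  moreover have "AE \<omega> in M. cnorm M G v (\<lambda>w. Y w - Z w) \<omega> \<le> cnorm M G v (\<lambda>w. X w - Z w) \<omega>"
    using Z unfolding condE_def by (intro cnorm_diff_cond_exp_le[OF finite assms(2-7)]) blast
  ultimately show ?thesis
    unfolding eps_Y eps_X by eventually_elim (rule order_trans)
qed

end
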